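(* Consider two quantum images, a carrier and an embedder, and a fixed pixel position $j$, whose true phases are $\varphi_j$ (carrier) and $\theta_j$ (embedder). Suppose the phases are estimated by covariant phase measurements in two independent physical systems with number operators $N_1$ and $N_2$ respectively, giving estimates $\varphi_j'$ and $\theta_j'$ with phase uncertainties $\Delta_M\{\varphi\}$ and $\Delta_M\{\theta\}$. Then the joint uncertainty of the synthesized pixel satisfies $$\tanh\big(\Delta_M\{\varphi\}\cdot\Delta N_1+\Delta_M\{\theta\}\cdot\Delta N_2\big)+\Delta_M\{\varphi\}\cdot\Delta N_1\ \ge\ \tanh(1)+\tfrac12 ,$$ i.e. its lower bound is $\tanh(1)+\frac12$.
   Context: A quantum image is represented as $|I(\{\theta_j\})\rangle=\frac{1}{2^n}\sum_{j=0}^{2^{2n}-1}(|0\rangle+e^{i\theta_j}|1\rangle)\otimes|j\rangle$ with $\theta_j\in(0,\pi/2)$ the grey level at position $j$. The synthesized pixel at position $j$ has phase $\frac{\pi}{2}\tanh(\theta_j'+\varphi_j')+\delta_j$ with $\delta_j=\varphi_j-\varphi_j'$. For a Hilbert space with orthonormal basis $\{|n\rangle:n\ge0\}$, the number operator is $N=\sum_{n\ge0}n|n\rangle\langle n|$; for a state $|\phi\rangle$, $\bar N=\langle\phi|N|\phi\rangle$ and $\Delta N=\|(N-\bar N)|\phi\rangle\|^2$. For a phase measurement $M$ with outcome distribution $P(d\varphi)$ on $(-\pi,\pi)$, $E\{e^{i\varphi}\}=\int e^{i\varphi}P(d\varphi)$, $D\{e^{i\varphi}\}=\int|e^{i\varphi}-E\{e^{i\varphi}\}|^2P(d\varphi)$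 and $\Delta_M\{\varphi\}^2=D\{e^{i\varphi}\}/|E\{e^{i\varphi}\}|^2$. A covariant measurement is one of the form $M(d\varphi)=e^{iN\varphi}P_0e^{-iN\varphi}\frac{d\varphi}{2\pi}$ with $P_0\ge0$; for such measurements Holevo's uncertainty relation $\Delta_M\{\varphi\}\cdot\Delta N\ge\frac12$ holds. *)

theory Defs
  imports "HOL-Analysis.Analysis"
begin

text \<open>A pure state of a single-mode system, written in the number basis |n>:
  amplitudes c n, normalised, and in the domain of the number operator N
  (so that its uncertainty is finite).\<close>
definition is_state :: "(nat \<Rightarrow> complex) \<Rightarrow> bool" where
  "is_state c \<longleftrightarrow> ((\<lambda>n. (cmod (c n))\<^sup>2) sums 1) \<and>
                   summable (\<lambda>n. (real n)\<^sup>2 * (cmod (c n))\<^sup>2)"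

definition num_mean :: "(nat \<Rightarrow> complex) \<Rightarrow> real" where
  "num_mean c = (\<Sum>n. real n * (cmod (c n))\<^sup>2)"

definition num_unc :: "(nat \<Rightarrow> complex) \<Rightarrow> real" where
  "num_unc c = sqrt (\<Sum>n. (real n - num_mean c)\<^sup>2 * (cmod (c n))\<^sup>2)"

text \<open>Seed operator P0 (matrix in the number basis) of a covariant phase
  measurement  M(d phi) = e^{iN phi} P0 e^{-iN phi} d phi / 2 pi :
  P0 is positive semidefinite, and the normalisation  int M = I  forces
  diagonal entries equal to 1.\<close>
definition covariant_seed :: "(nat \<Rightarrow> nat \<Rightarrow> complex) \<Rightarrow> bool" where
  "covariant_seed P0 \<longleftrightarrow> (\<forall>n. P0 n n = 1) \<and>
     (\<forall>K (v :: nat \<Rightarrow> complex).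
        Im (\<Sum>m<K. \<Sum>n<K. cnj (v m) * P0 m n * v n) = 0 \<and>
        Re (\<Sum>m<K. \<Sum>n<K. cnj (v m) * P0 m n * v n) \<ge> 0)"

text \<open>P is the outcome distribution  P(d phi) = <c|M(d phi)|c>  of the covariant
  measurement with seed P0 in state c: a Borel probability measure on (-pi,pi)
  whose Fourier coefficients are those prescribed by the Born rule,
  int e^{ik phi} P(d phi) = sum_m conj(c m) P0 m (m+k) c (m+k)  (k >= 0;
  negative k follow by conjugation). These determine P uniquely.\<close>
definition phase_outcome_dist ::
  "(nat \<Rightarrow> complex) \<Rightarrow> (nat \<Rightarrow> nat \<Rightarrow> complex) \<Rightarrow> real measure \<Rightarrow> bool" where
  "phase_outcome_dist c P0 P \<longleftrightarrow>
     emeasure P (space P) = 1 \<and> sets P = sets (borel :: real measure) \<and>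
     (AE \<phi> in P. - pi < \<phi> \<and> \<phi> < pi) \<and>
     (\<forall>k::nat. (\<lambda>m. cnj (c m) * P0 m (m + k) * c (m + k))
                 sums (integral\<^sup>L P (\<lambda>\<phi>. cis (real k * \<phi>))))"

definition phase_mean :: "real measure \<Rightarrow> complex" where
  "phase_mean P = integral\<^sup>L P (\<lambda>\<phi>. cis \<phi>)"

definition phase_disp :: "real measure \<Rightarrow> real" where
  "phase_disp P = integral\<^sup>L P (\<lambda>\<phi>. (cmod (cis \<phi> - phase_mean P))\<^sup>2)"

definition phase_unc :: "real measure \<Rightarrow> real" where
  "phase_unc P = sqrt (phase_disp P / (cmod (phase_mean P))\<^sup>2)"

end

theory Submission
  imports Defs
begin

(* Both products Delta_M{phi} * Delta N are at least 1/2 by Holevo's uncertainty relation, so the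
   argument of tanh is at least 1 and the bound follows from monotonicity of tanh.

   For Holevo's relation put a n = |c n| and S = sum a n * a (n+1). A positive seed with unit
   diagonal has entries of modulus at most 1, hence |E{e^(i phi)}| <= S, and D{e^(i phi)} =
   1 - |E{e^(i phi)}|^2 for every probability distribution of phases. The commutator of N with
   the shift |n> -> |n+1> gives S = sum (n - mu) a n (a (n-1) - a (n+1)) for every mu, so
   Cauchy-Schwarz yields S^2 <= (Delta N)^2 * sum (a (n-1) - a (n+1))^2 <= 4 (Delta N)^2 (1 - S^2),
   the last step by the parallelogram law and sum (a (n-1) + a (n+1))^2 >= 4 S^2. Hence
   |E|^2 <= 4 (Delta N)^2 (1 - |E|^2), which is Delta_M{phi} * Delta N >= 1/2. *)

lemma summable_mult_of_summable_squares:
  fixes f g :: "nat \<Rightarrow> real"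
  assumes "summable (\<lambda>n. (f n)\<^sup>2)" and "summable (\<lambda>n. (g n)\<^sup>2)"
  shows "summable (\<lambda>n. f n * g n)"
proof (rule summable_comparison_test')
  show "summable (\<lambda>n. ((f n)\<^sup>2 + (g n)\<^sup>2) / 2)"
    using assms by (intro summable_divide summable_add)
  show "norm (f n * g n) \<le> ((f n)\<^sup>2 + (g n)\<^sup>2) / 2" for n
    using sum_squares_bound[of "\<bar>f n\<bar>" "\<bar>g n\<bar>"] by (simp add: abs_mult)
qed

lemma suminf_mult_square_le:
  fixes f g :: "nat \<Rightarrow> real"
  assumes "summable (\<lambda>n. (f n)\<^sup>2)" and "summable (\<lambda>n. (g n)\<^sup>2)"
  shows "(\<Sum>n. f n * g n)\<^sup>2 \<le> (\<Sum>n. (f n)\<^sup>2) * (\<Sum>n. (g n)\<^sup>2)"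
proof (rule LIMSEQ_le)
  show "(\<lambda>N. (\<Sum>n<N. f n * g n)\<^sup>2) \<longlonglongrightarrow> (\<Sum>n. f n * g n)\<^sup>2"
    using assms by (intro tendsto_power summable_LIMSEQ summable_mult_of_summable_squares)
  show "(\<lambda>N. (\<Sum>n<N. (f n)\<^sup>2) * (\<Sum>n<N. (g n)\<^sup>2)) \<longlonglongrightarrow> (\<Sum>n. (f n)\<^sup>2) * (\<Sum>n. (g n)\<^sup>2)"
    using assms by (intro tendsto_mult summable_LIMSEQ)
  show "\<exists>N. \<forall>M\<ge>N. (\<Sum>n<M. f n * g n)\<^sup>2 \<le> (\<Sum>n<M. (f n)\<^sup>2) * (\<Sum>n<M. (g n)\<^sup>2)"
    using Cauchy_Schwarz_ineq_sum by blast
qed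

lemma summable_square_add:
  fixes f g :: "nat \<Rightarrow> real"
  assumes "summable (\<lambda>n. (f n)\<^sup>2)" and "summable (\<lambda>n. (g n)\<^sup>2)"
  shows "summable (\<lambda>n. (f n + g n)\<^sup>2)"
proof (rule summable_comparison_test')
  show "summable (\<lambda>n. 2 * (f n)\<^sup>2 + 2 * (g n)\<^sup>2)"
    using assms by (intro summable_add summable_mult)
  show "norm ((f n + g n)\<^sup>2) \<le> 2 * (f n)\<^sup>2 + 2 * (g n)\<^sup>2" for n
    unfolding real_norm_def abs_power2 using sum_squares_bound[of "f n" "g n"]
    by (simp add: power2_sum)
qed

lemma summable_square_diff:
  fixes f g :: "nat \<Rightarrow> real"
  assumes "summable (\<lambda>n. (f n)\<^sup>2)" and "summable (\<lambda>n. (g n)\<^sup>2)"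
  shows "summable (\<lambda>n. (f n - g n)\<^sup>2)"
  using summable_square_add[of f "\<lambda>n. - g n"] assms by simp

lemma summable_centered_square:
  fixes a :: "nat \<Rightarrow> real"
  assumes "summable (\<lambda>n. (a n)\<^sup>2)" and "summable (\<lambda>n. (real n)\<^sup>2 * (a n)\<^sup>2)"
  shows "summable (\<lambda>n. ((real n - \<mu>) * a n)\<^sup>2)"
  unfolding left_diff_distrib
  using assms by (intro summable_square_diff) (simp_all add: power_mult_distrib summable_mult)

definition shift_right :: "(nat \<Rightarrow> real) \<Rightarrow> nat \<Rightarrow> real" where
  "shift_right a n = (if n = 0 then 0 else a (n - 1))"

lemma shift_right_0 [simp]: "shift_right a 0 = 0"
  and shift_right_Suc [simp]: "shift_right a (Suc n) = a n"
  by (simp_all add: shift_right_def)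

lemma sums_shift_right:
  assumes "(\<lambda>n. f (Suc n) * a n) sums s"
  shows "(\<lambda>n. f n * shift_right a n) sums s"
  using assms sums_Suc_iff[of "\<lambda>n. f n * shift_right a n"] by simp

lemma sums_square_shift_right:
  assumes "(\<lambda>n. (a n)\<^sup>2) sums s"
  shows "(\<lambda>n. (shift_right a n)\<^sup>2) sums s"
  using assms sums_Suc_iff[of "\<lambda>n. (shift_right a n)\<^sup>2"] by simp

lemma overlap_commutator_sums:
  fixes a :: "nat \<Rightarrow> real"
  assumes a: "summable (\<lambda>n. (a n)\<^sup>2)" and u: "summable (\<lambda>n. ((real n - \<mu>) * a n)\<^sup>2)"
  shows "(\<lambda>n. (real n - \<mu>) * a n * (shift_right a n - a (Suc n))) sums (\<Sum>n. a n * a (Suc n))"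
proof -
  define u where "u n = (real n - \<mu>) * a n" for n
  define S where "S = (\<Sum>n. a n * a (Suc n))"
  have a_Suc: "summable (\<lambda>n. (a (Suc n))\<^sup>2)"
    using a by (subst summable_Suc_iff)
  have uc: "(\<lambda>n. u n * a (Suc n)) sums (\<Sum>n. u n * a (Suc n))"
    using u a_Suc by (intro summable_sums summable_mult_of_summable_squares) (simp_all add: u_def)
  have "(\<lambda>n. u n * a (Suc n) + a n * a (Suc n)) sums ((\<Sum>n. u n * a (Suc n)) + S)"
    unfolding S_def using a a_Suc by (intro sums_add uc summable_sums summable_mult_of_summable_squares)
  moreover have "u (Suc n) * a n = u n * a (Suc n) + a n * a (Suc n)" for n
    by (simp add: u_def algebra_simps)
  ultimately have "(\<lambda>n. u n * shift_right a n) sums ((\<Sum>n. u n * a (Suc n)) + S)"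
    by (intro sums_shift_right) simp
  from sums_diff[OF this uc] show ?thesis
    by (simp add: S_def u_def right_diff_distrib)
qed

lemma shift_difference_square_le:
  fixes a :: "nat \<Rightarrow> real"
  assumes a: "(\<lambda>n. (a n)\<^sup>2) sums 1"
  shows "(\<Sum>n. (shift_right a n - a (Suc n))\<^sup>2) \<le> 4 * (1 - (\<Sum>n. a n * a (Suc n))\<^sup>2)"
proof -
  define b where "b = shift_right a"
  define c where "c = (\<lambda>n. a (Suc n))"
  define S where "S = (\<Sum>n. a n * a (Suc n))"
  have b: "(\<lambda>n. (b n)\<^sup>2) sums 1"
    unfolding b_def using a by (rule sums_square_shift_right)
  have c: "(\<lambda>n. (c n)\<^sup>2) sums (1 - (a 0)\<^sup>2)"
    unfolding c_def using a by (subst sums_Suc_iff) simp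
  have sa: "summable (\<lambda>n. (a n)\<^sup>2)" and sb: "summable (\<lambda>n. (b n)\<^sup>2)"
    and sc: "summable (\<lambda>n. (c n)\<^sup>2)"
    using a b c by (auto intro: sums_summable)
  have "(\<lambda>n. (b n - c n)\<^sup>2 + (b n + c n)\<^sup>2) sums (2 * 1 + 2 * (1 - (a 0)\<^sup>2))"
    unfolding power2_diff power2_sum using sums_add[OF sums_mult[OF b] sums_mult[OF c], of 2 2]
    by (simp add: algebra_simps)
  moreover have "(\<lambda>n. (b n - c n)\<^sup>2 + (b n + c n)\<^sup>2) sums
      ((\<Sum>n. (b n - c n)\<^sup>2) + (\<Sum>n. (b n + c n)\<^sup>2))"
    using sb sc by (intro sums_add summable_sums summable_square_add summable_square_diff)
  ultimately have parallelogram: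
    "(\<Sum>n. (b n - c n)\<^sup>2) + (\<Sum>n. (b n + c n)\<^sup>2) = 4 - 2 * (a 0)\<^sup>2"
    using sums_unique2 by fastforce
  have ac: "(\<lambda>n. a n * c n) sums S"
    unfolding S_def c_def using sa sc[unfolded c_def]
    by (intro summable_sums summable_mult_of_summable_squares)
  have "(\<lambda>n. a n * b n) sums S"
    unfolding b_def using ac by (intro sums_shift_right) (simp add: c_def mult.commute)
  from sums_add[OF this ac] have "(\<lambda>n. a n * (b n + c n)) sums (2 * S)"
    by (simp add: distrib_left)
  then have "(2 * S)\<^sup>2 \<le> (\<Sum>n. (a n)\<^sup>2) * (\<Sum>n. (b n + c n)\<^sup>2)"
    using suminf_mult_square_le[OF sa summable_square_add[OF sb sc]] sums_unique by metis
  then have "4 * S\<^sup>2 \<le> (\<Sum>n. (b n + c n)\<^sup>2)"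
    using sums_unique[OF a] by (simp add: power_mult_distrib)
  with parallelogram have "(\<Sum>n. (b n - c n)\<^sup>2) \<le> 4 - 4 * S\<^sup>2"
    using zero_le_power2[of "a 0"] by linarith
  then show ?thesis
    by (simp add: b_def c_def S_def right_diff_distrib)
qed

lemma overlap_number_uncertainty:
  fixes a :: "nat \<Rightarrow> real"
  assumes a: "(\<lambda>n. (a n)\<^sup>2) sums 1" and u: "summable (\<lambda>n. ((real n - \<mu>) * a n)\<^sup>2)"
  shows "(\<Sum>n. a n * a (Suc n))\<^sup>2
           \<le> 4 * (\<Sum>n. ((real n - \<mu>) * a n)\<^sup>2) * (1 - (\<Sum>n. a n * a (Suc n))\<^sup>2)"
proof -
  define S where "S = (\<Sum>n. a n * a (Suc n))"
  define V where "V = (\<Sum>n. ((real n - \<mu>) * a n)\<^sup>2)"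
  have sa: "summable (\<lambda>n. (a n)\<^sup>2)"
    using a by (rule sums_summable)
  have "summable (\<lambda>n. (a (Suc n))\<^sup>2)"
    using sa by (subst summable_Suc_iff)
  then have "summable (\<lambda>n. (shift_right a n - a (Suc n))\<^sup>2)"
    using sums_summable[OF sums_square_shift_right[OF a]] by (intro summable_square_diff)
  then have "S\<^sup>2 \<le> V * (\<Sum>n. (shift_right a n - a (Suc n))\<^sup>2)"
    using suminf_mult_square_le[OF u] sums_unique[OF overlap_commutator_sums[OF sa u]]
    by (simp add: S_def V_def mult.assoc)
  also have "\<dots> \<le> V * (4 * (1 - S\<^sup>2))"
    unfolding S_def V_def using u
    by (intro mult_left_mono shift_difference_square_le[OF a] suminf_nonneg) simp_all
  finally have "S\<^sup>2 \<le> 4 * V * (1 - S\<^sup>2)"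
    by (simp only: ac_simps)
  then show ?thesis
    by (simp only: S_def V_def)
qed

lemma quadratic_form_two_point:
  fixes Q :: "nat \<Rightarrow> nat \<Rightarrow> complex"
  assumes "m \<noteq> n" "m < K" "n < K"
    and v: "v = (\<lambda>i. if i = m then x else if i = n then y else 0)"
  shows "(\<Sum>i<K. \<Sum>j<K. cnj (v i) * Q i j * v j)
         = cnj x * Q m m * x + cnj x * Q m n * y + cnj y * Q n m * x + cnj y * Q n n * y"
proof -
  have sub: "{m, n} \<subseteq> {..<K}" using assms by auto
  have "(\<Sum>i<K. \<Sum>j<K. cnj (v i) * Q i j * v j) = (\<Sum>i\<in>{m, n}. \<Sum>j<K. cnj (v i) * Q i j * v j)"
    by (rule sum.mono_neutral_right[OF _ sub]) (auto simp: v)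
  also have "\<dots> = (\<Sum>i\<in>{m, n}. \<Sum>j\<in>{m, n}. cnj (v i) * Q i j * v j)"
    by (intro sum.cong refl sum.mono_neutral_right[OF _ sub]) (auto simp: v)
  finally show ?thesis using assms by (simp add: v)
qed

lemma covariant_seed_two_point:
  assumes "covariant_seed Q" and "m \<noteq> n"
  shows "Im (cnj x * x + cnj x * Q m n * y + cnj y * Q n m * x + cnj y * y) = 0"
    and "Re (cnj x * x + cnj x * Q m n * y + cnj y * Q n m * x + cnj y * y) \<ge> 0"
proof -
  define v where "v = (\<lambda>i. if i = m then x else if i = n then y else 0)"
  define K where "K = Suc (max m n)"
  have "m < K" and "n < K"
    by (simp_all add: K_def)
  moreover have "Q m m = 1" and "Q n n = 1"
    using assms(1) by (simp_all add: covariant_seed_def)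
  ultimately have "(\<Sum>i<K. \<Sum>j<K. cnj (v i) * Q i j * v j)
      = cnj x * x + cnj x * Q m n * y + cnj y * Q n m * x + cnj y * y"
    using quadratic_form_two_point[OF assms(2) _ _ v_def] by simp
  moreover have "Im (\<Sum>i<K. \<Sum>j<K. cnj (v i) * Q i j * v j) = 0"
    and "Re (\<Sum>i<K. \<Sum>j<K. cnj (v i) * Q i j * v j) \<ge> 0"
    using assms(1) unfolding covariant_seed_def by blast+
  ultimately show "Im (cnj x * x + cnj x * Q m n * y + cnj y * Q n m * x + cnj y * y) = 0"
    and "Re (cnj x * x + cnj x * Q m n * y + cnj y * Q n m * x + cnj y * y) \<ge> 0"
    by simp_all
qed

lemma covariant_seed_hermitian:
  assumes "covariant_seed Q"
  shows "Q n m = cnj (Q m n)"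
proof (cases "m = n")
  case True
  then show ?thesis using assms by (simp add: covariant_seed_def)
next
  case False
  have "Im (Q m n) + Im (Q n m) = 0"
    using covariant_seed_two_point(1)[OF assms False, of 1 1] by simp
  moreover have "Re (Q m n) - Re (Q n m) = 0"
    using covariant_seed_two_point(1)[OF assms False, of 1 \<i>] by simp
  ultimately show ?thesis by (simp add: complex_eq_iff)
qed

lemma covariant_seed_norm_le_1:
  assumes "covariant_seed Q"
  shows "cmod (Q m n) \<le> 1"
proof (cases "m = n")
  case True
  then show ?thesis using assms by (simp add: covariant_seed_def)
next
  case False
  define q where "q = Q m n"
  have "Q n m = cnj q"
    unfolding q_def by (rule covariant_seed_hermitian[OF assms])
  then have "0 \<le> Re (1 - cnj q * q)"
    using covariant_seed_two_point(2)[OF assms False, of 1 "- cnj q"] by (simp add: q_def)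
  moreover have "cnj q * q = of_real ((cmod q)\<^sup>2)"
    by (subst complex_norm_square) (rule mult.commute)
  ultimately have "(cmod q)\<^sup>2 \<le> 1"
    by simp
  then show ?thesis
    unfolding q_def abs_square_le_1 by simp
qed

lemma norm_phase_mean_le_overlap:
  assumes "covariant_seed Q" and "phase_outcome_dist c Q P"
    and "summable (\<lambda>n. (cmod (c n))\<^sup>2)"
  shows "cmod (phase_mean P) \<le> (\<Sum>n. cmod (c n) * cmod (c (Suc n)))"
proof -
  have "\<forall>k::nat. (\<lambda>n. cnj (c n) * Q n (n + k) * c (n + k)) sums (\<integral>\<phi>. cis (real k * \<phi>) \<partial>P)"
    using assms(2) unfolding phase_outcome_dist_def by blast
  from this[rule_format, of 1] have "phase_mean P = (\<Sum>n. cnj (c n) * Q n (Suc n) * c (Suc n))"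
    by (simp add: sums_unique phase_mean_def)
  moreover have "norm (cnj (c n) * Q n (Suc n) * c (Suc n)) \<le> cmod (c n) * cmod (c (Suc n))" for n
    unfolding norm_mult complex_mod_cnj
    by (intro mult_right_mono mult_left_le covariant_seed_norm_le_1[OF assms(1)]) simp_all
  moreover have "summable (\<lambda>n. (cmod (c (Suc n)))\<^sup>2)"
    using assms(3) by (subst summable_Suc_iff)
  then have "summable (\<lambda>n. cmod (c n) * cmod (c (Suc n)))"
    using assms(3) by (intro summable_mult_of_summable_squares)
  ultimately show ?thesis
    by (simp add: norm_suminf_le)
qed

lemma phase_disp_eq:
  assumes "emeasure P (space P) = 1" and "sets P = sets (borel :: real measure)"
  shows "phase_disp P = 1 - (cmod (phase_mean P))\<^sup>2"
proof -
  interpret finite_measure P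
    by (rule finite_measureI) (simp add: assms(1))
  have "(\<lambda>\<phi>. cis \<phi>) \<in> borel_measurable P"
    unfolding measurable_cong_sets[OF assms(2) refl]
    by (intro borel_measurable_continuous_onI continuous_intros)
  then have int_cis: "integrable P (\<lambda>\<phi>. cis \<phi>)"
    by (intro integrable_const_bound[where B = 1]) simp_all
  define E where "E = phase_mean P"
  define f where "f = (\<lambda>\<phi>. Re (cnj E * cis \<phi>))"
  have "integrable P f"
    unfolding f_def using int_cis by (intro integrable_Re integrable_mult_right)
  moreover have "integral\<^sup>L P f = Re (cnj E * E)"
    unfolding f_def using int_cis by (subst integral_Re) (auto simp: E_def phase_mean_def)
  moreover have "(cmod (cis \<phi> - E))\<^sup>2 = 1 + (cmod E)\<^sup>2 - 2 * f \<phi>" for \<phi>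
    by (simp add: f_def cmod_power2 power2_diff algebra_simps)
  moreover have "Re (cnj E * E) = (cmod E)\<^sup>2"
    using complex_norm_square[of E] by (metis Re_complex_of_real mult.commute)
  ultimately show ?thesis
    using assms(1) by (simp add: phase_disp_def E_def[symmetric] measure_def)
qed

theorem covariant_phase_number_uncertainty:
  assumes "is_state c" and "covariant_seed Q" and "phase_outcome_dist c Q P"
    and "phase_mean P \<noteq> 0"
  shows "phase_unc P * num_unc c \<ge> 1 / 2"
proof -
  define a where "a n = cmod (c n)" for n
  define S where "S = (\<Sum>n. a n * a (Suc n))"
  define V where "V = (\<Sum>n. ((real n - num_mean c) * a n)\<^sup>2)"
  define e where "e = (cmod (phase_mean P))\<^sup>2"
  have a: "(\<lambda>n. (a n)\<^sup>2) sums 1" and "summable (\<lambda>n. (real n)\<^sup>2 * (a n)\<^sup>2)"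
    using assms(1) unfolding is_state_def a_def by blast+
  then have u: "summable (\<lambda>n. ((real n - num_mean c) * a n)\<^sup>2)"
    by (intro summable_centered_square sums_summable[OF a])
  have "V \<ge> 0"
    unfolding V_def using u by (intro suminf_nonneg) simp_all
  have "e \<le> S\<^sup>2"
    unfolding e_def S_def a_def using a[unfolded a_def]
    by (intro power_mono norm_phase_mean_le_overlap[OF assms(2,3)] sums_summable) simp_all
  also have "S\<^sup>2 \<le> 4 * V * (1 - S\<^sup>2)"
    unfolding S_def V_def using a u by (rule overlap_number_uncertainty)
  also have "\<dots> \<le> 4 * V * (1 - e)"
    using \<open>e \<le> S\<^sup>2\<close> \<open>V \<ge> 0\<close> by (intro mult_left_mono) simp_all
  finally have "e \<le> 4 * V * (1 - e)" .
  moreover have "e > 0"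
    using assms(4) by (simp add: e_def)
  ultimately have "1 / 4 \<le> (1 - e) / e * V"
    by (simp add: field_simps)
  have "1 / 2 = sqrt (1 / 4)"
    by (simp add: real_sqrt_divide)
  also have "\<dots> \<le> sqrt ((1 - e) / e * V)"
    by (rule real_sqrt_le_mono) fact
  also have "\<dots> = sqrt ((1 - e) / e) * sqrt V"
    by (rule real_sqrt_mult)
  also have "\<dots> = phase_unc P * num_unc c"
    using phase_disp_eq[of P] assms(3)
    by (simp add: phase_unc_def phase_outcome_dist_def num_unc_def V_def a_def e_def
        power_mult_distrib)
  finally show ?thesis .
qed

theorem theorem4:
  fixes c1 c2 :: "nat \<Rightarrow> complex"
    and Q1 Q2 :: "nat \<Rightarrow> nat \<Rightarrow> complex"
    and P1 P2 :: "real measure"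
  assumes "is_state c1" and "is_state c2"
    and "covariant_seed Q1" and "covariant_seed Q2"
    and "phase_outcome_dist c1 Q1 P1" and "phase_outcome_dist c2 Q2 P2"
    and "phase_mean P1 \<noteq> 0" and "phase_mean P2 \<noteq> 0"
  shows "tanh (phase_unc P1 * num_unc c1 + phase_unc P2 * num_unc c2)
           + phase_unc P1 * num_unc c1 \<ge> tanh 1 + 1 / 2"
proof -
  have h1: "phase_unc P1 * num_unc c1 \<ge> 1 / 2"
    using assms(1,3,5,7) by (rule covariant_phase_number_uncertainty)
  moreover have "phase_unc P2 * num_unc c2 \<ge> 1 / 2"
    using assms(2,4,6,8) by (rule covariant_phase_number_uncertainty)
  ultimately have "tanh 1 \<le> tanh (phase_unc P1 * num_unc c1 + phase_unc P2 * num_unc c2)"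
    by (intro strict_mono_less_eq[OF tanh_real_strict_mono, THEN iffD2]) simp
  with h1 show ?thesis
    by linarith
qed

end
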